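(* For all $\alpha\in\mathbb R$ and $\rho>1$, $$\lim_{n\to\infty}\max_{Q\in\mathcal P_n(\rho)}D_{\mathrm A}^{(\alpha)}(Q\|U_n)=\Delta(\alpha,\rho),$$ where, for $\alpha\notin\{0,1\}$, $$\Delta(\alpha,\rho)=\frac1{\alpha(\alpha-1)}\Bigg[\frac{\big(\frac{\rho^\alpha-1}{\alpha}\big)^{\alpha}\big(\frac{\rho-\rho^\alpha}{1-\alpha}\big)^{1-\alpha}}{\rho-1}-1\Bigg],$$ and $\Delta(1,\rho)=\Delta(0,\rho)=\frac{\rho\ln\rho}{\rho-1}-\ln\big(\frac{e\rho\ln\rho}{\rho-1}\big)$. In particular, for all $n\ge2$, $\max_{Q\in\mathcal P_n(\rho)}D(Q\|U_n)\le\frac{\rho\log\rho}{\rho-1}-\log\big(\frac{e\rho\ln\rho}{\rho-1}\big)$, and this bound is asymptotically tight as $n\to\infty$.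
   Context: $\mathcal P_n(\rho)$: probability mass functions on $\{1,\dots,n\}$ with all masses positive and ratio of maximal to minimal mass at most $\rho$; $U_n$ uniform on $\{1,\dots,n\}$. The Alpha-divergence is $D_{\mathrm A}^{(\alpha)}(P\|Q):=\sum_xQ(x)u_\alpha(P(x)/Q(x))$ with $u_\alpha(t)=\frac{t^\alpha-\alpha(t-1)-1}{\alpha(\alpha-1)}$ for $\alpha\notin\{0,1\}$, $u_1(t)=t\ln t+1-t$, $u_0(t)=-\ln t$. $D(P\|Q)=\sum_xP(x)\log\frac{P(x)}{Q(x)}$ with logarithm in an arbitrary base. *)

theory Defs
  imports Complex_Main
begin

definition u_alpha :: "real \<Rightarrow> real \<Rightarrow> real" where
  "u_alpha \<alpha> t =
     (if \<alpha> = 1 then t * ln t + 1 - t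
      else if \<alpha> = 0 then - ln t
      else (t powr \<alpha> - \<alpha> * (t - 1) - 1) / (\<alpha> * (\<alpha> - 1)))"

definition unif :: "nat \<Rightarrow> nat \<Rightarrow> real" where
  "unif n x = (if x \<in> {1..n} then 1 / real n else 0)"

definition alpha_div :: "real \<Rightarrow> nat \<Rightarrow> (nat \<Rightarrow> real) \<Rightarrow> (nat \<Rightarrow> real) \<Rightarrow> real" where
  "alpha_div \<alpha> n P Q = (\<Sum>x\<in>{1..n}. Q x * u_alpha \<alpha> (P x / Q x))"

definition rel_ent :: "real \<Rightarrow> nat \<Rightarrow> (nat \<Rightarrow> real) \<Rightarrow> (nat \<Rightarrow> real) \<Rightarrow> real" where
  "rel_ent b n P Q = (\<Sum>x\<in>{1..n}. P x * log b (P x / Q x))"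

definition Pn :: "real \<Rightarrow> nat \<Rightarrow> (nat \<Rightarrow> real) set" where
  "Pn \<rho> n = {Q. (\<forall>x\<in>{1..n}. Q x > 0) \<and> (\<forall>x. x \<notin> {1..n} \<longrightarrow> Q x = 0) \<and>
      (\<Sum>x\<in>{1..n}. Q x) = 1 \<and>
      Max (Q ` {1..n}) / Min (Q ` {1..n}) \<le> \<rho>}"

definition Delta :: "real \<Rightarrow> real \<Rightarrow> real" where
  "Delta \<alpha> \<rho> =
     (if \<alpha> = 0 \<or> \<alpha> = 1 then
        \<rho> * ln \<rho> / (\<rho> - 1) - ln (exp 1 * \<rho> * ln \<rho> / (\<rho> - 1))
      else
        1 / (\<alpha> * (\<alpha> - 1)) *
          (((\<rho> powr \<alpha> - 1) / \<alpha>) powr \<alpha> * ((\<rho> - \<rho> powr \<alpha>) / (1 - \<alpha>)) powr (1 - \<alpha>)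
            / (\<rho> - 1) - 1))"

end

theory Submission
  imports Defs "HOL-Analysis.Convex"
begin

(* For convex u and masses with n Q x confined to an interval [m, \<rho> m], the sum
   \<Sum>x. u (n Q x) / n stays below the same sum for the chord of u over [m, \<rho> m]; as the masses
   add up to 1, that bound depends on m only and is attained by the two-level distribution with
   masses m/n and \<rho> m/n.  A sign analysis of its derivative in m shows that its maximum over m > 0
   is \<Delta>(\<alpha>, \<rho>), attained inside (1/\<rho>, 1); two-level distributions whose proportion of large
   masses tends to the right value approach this maximum.  The relative entropy is the case
   \<alpha> = 1 divided by ln b. *)

(* (1 - m) / ((\<rho> - 1) m) is the proportion of atoms that must carry the mass \<rho> m/n, the others
   carrying m/n, for the masses to add up to 1. *)
definition chord_div :: "(real \<Rightarrow> real) \<Rightarrow> real \<Rightarrow> real \<Rightarrow> real" where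
  "chord_div f \<rho> m = f m + (1 - m) / ((\<rho> - 1) * m) * (f (\<rho> * m) - f m)"

lemma convex_on_u_alpha: "convex_on {0<..} (u_alpha \<alpha>)"
proof -
  consider "\<alpha> = 1" | "\<alpha> = 0" | "\<alpha> \<noteq> 0" "\<alpha> \<noteq> 1" by blast
  then show ?thesis
  proof cases
    case 1
    then have "u_alpha \<alpha> = (\<lambda>t. t * ln t + 1 - t)" by (simp add: fun_eq_iff u_alpha_def)
    then show ?thesis
      by (intro f''_ge0_imp_convex[where f'="\<lambda>t. ln t" and f''="\<lambda>t. 1 / t"])
         (auto intro!: derivative_eq_intros simp: field_simps)
  next
    case 2
    then have "u_alpha \<alpha> = (\<lambda>t. - ln t)" by (simp add: fun_eq_iff u_alpha_def)
    then show ?thesis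
      by (intro f''_ge0_imp_convex[where f'="\<lambda>t. - (1 / t)" and f''="\<lambda>t. 1 / t\<^sup>2"])
         (auto intro!: derivative_eq_intros simp: field_simps power2_eq_square)
  next
    case 3
    then have u: "u_alpha \<alpha> = (\<lambda>t. (t powr \<alpha> - \<alpha> * (t - 1) - 1) / (\<alpha> * (\<alpha> - 1)))"
      by (simp add: fun_eq_iff u_alpha_def)
    show ?thesis
      unfolding u
    proof (rule f''_ge0_imp_convex[where f'="\<lambda>t. (t powr (\<alpha> - 1) - 1) / (\<alpha> - 1)"
                                      and f''="\<lambda>t. t powr (\<alpha> - 2)"])
      fix t :: real assume "t \<in> {0<..}"
      then have t: "t > 0" by simp
      have "((\<lambda>t. (t powr \<alpha> - \<alpha> * (t - 1) - 1) / (\<alpha> * (\<alpha> - 1))) has_real_derivative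
              (\<alpha> * t powr (\<alpha> - 1) - \<alpha>) / (\<alpha> * (\<alpha> - 1))) (at t)"
        using t 3 by (auto intro!: derivative_eq_intros)
      then show "((\<lambda>t. (t powr \<alpha> - \<alpha> * (t - 1) - 1) / (\<alpha> * (\<alpha> - 1))) has_real_derivative
              (t powr (\<alpha> - 1) - 1) / (\<alpha> - 1)) (at t)"
        by (rule DERIV_cong) (use 3 in \<open>simp add: field_simps\<close>)
      have "((\<lambda>t. (t powr (\<alpha> - 1) - 1) / (\<alpha> - 1)) has_real_derivative
              (\<alpha> - 1) * t powr (\<alpha> - 1 - 1) / (\<alpha> - 1)) (at t)"
        using t 3 by (auto intro!: derivative_eq_intros)
      then show "((\<lambda>t. (t powr (\<alpha> - 1) - 1) / (\<alpha> - 1)) has_real_derivative t powr (\<alpha> - 2)) (at t)"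
        by (rule DERIV_cong) (use 3 in simp)
    qed auto
  qed
qed

lemma alpha_div_unif:
  "alpha_div \<alpha> n Q (unif n) = (\<Sum>x\<in>{1..n}. u_alpha \<alpha> (real n * Q x) / real n)"
  unfolding alpha_div_def by (intro sum.cong) (auto simp: unif_def mult.commute)

lemma Pn_masses_between:
  assumes "n \<ge> 1" and "Q \<in> Pn \<rho> n"
  obtains q where "q > 0" and "\<And>x. x \<in> {1..n} \<Longrightarrow> q \<le> Q x \<and> Q x \<le> \<rho> * q"
proof
  let ?A = "Q ` {1..n}"
  have A: "finite ?A" "?A \<noteq> {}" using assms(1) by auto
  show q: "Min ?A > 0" using assms by (auto simp: Pn_def)
  have "Max ?A \<le> \<rho> * Min ?A" using assms(2) q by (simp add: Pn_def divide_le_eq)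
  then show "Min ?A \<le> Q x \<and> Q x \<le> \<rho> * Min ?A" if "x \<in> {1..n}" for x
    using that A by (meson Max_ge Min_le image_eqI order_trans)
qed

lemma sum_le_chord_div:
  assumes f: "convex_on {0<..} f" and \<rho>: "\<rho> > 1" and n: "n \<ge> 1" and Q: "Q \<in> Pn \<rho> n"
  shows "\<exists>m>0. (\<Sum>x\<in>{1..n}. f (real n * Q x) / real n) \<le> chord_div f \<rho> m"
proof -
  obtain q where q: "q > 0" and between: "\<And>x. x \<in> {1..n} \<Longrightarrow> q \<le> Q x \<and> Q x \<le> \<rho> * q"
    using Pn_masses_between[OF n Q] by blast
  define m where "m = real n * q"
  define B where "B = (f (\<rho> * m) - f m) / (\<rho> * m - m)"
  have m: "m > 0" "m < \<rho> * m" using q n \<rho> by (simp_all add: m_def)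
  have \<rho>m_eq: "\<rho> * m = real n * (\<rho> * q)" by (simp add: m_def)
  have f_m: "convex_on {m..\<rho> * m} f"
    by (rule convex_on_subset[OF f]) (use m in auto)
  have "f (real n * Q x) / real n \<le> (f m + B * (real n * Q x - m)) / real n" if "x \<in> {1..n}" for x
  proof -
    have "real n * Q x \<in> {m..\<rho> * m}"
      using between[OF that] n unfolding \<rho>m_eq by (simp add: m_def)
    from convex_onD_Icc'[OF f_m this] show ?thesis
      by (intro divide_right_mono) (simp_all add: B_def algebra_simps)
  qed
  then have "(\<Sum>x\<in>{1..n}. f (real n * Q x) / real n) \<le> (\<Sum>x\<in>{1..n}. (f m + B * (real n * Q x - m)) / real n)"
    by (rule sum_mono)
  also have "\<dots> = f m + B * (1 - m)"
    using Q n by (simp add: Pn_def sum_divide_distrib[symmetric] sum.distrib sum_subtractf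
                            sum_distrib_left[symmetric] field_simps)
  also have "\<dots> = chord_div f \<rho> m"
    by (simp add: chord_div_def B_def algebra_simps)
  finally show ?thesis using m by blast
qed

lemma sum_if_le_const:
  fixes a b :: real
  assumes "k \<le> n"
  shows "(\<Sum>x\<in>{1..n}. if x \<le> k then a else b) = real k * a + (real n - real k) * b"
  using assms
proof (induction n)
  case (Suc n)
  show ?case
  proof (cases "k \<le> n")
    case True
    with Suc show ?thesis by (simp add: algebra_simps)
  next
    case False
    with Suc have "k = Suc n" by simp
    then show ?thesis by (simp add: algebra_simps)
  qed
qed simp

definition two_level :: "real \<Rightarrow> nat \<Rightarrow> nat \<Rightarrow> nat \<Rightarrow> real" where
  "two_level \<rho> n k x =
     (if x \<in> {1..n} then (if x \<le> k then \<rho> else 1) / (real n + (\<rho> - 1) * real k) else 0)"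

lemma two_level_in_Pn:
  assumes \<rho>: "\<rho> \<ge> 1" and n: "n \<ge> 1" and k: "k \<le> n"
  shows "two_level \<rho> n k \<in> Pn \<rho> n"
proof -
  define D where "D = real n + (\<rho> - 1) * real k"
  have D: "D > 0" using n \<rho> by (simp add: D_def add_pos_nonneg)
  let ?A = "two_level \<rho> n k ` {1..n}"
  have A: "finite ?A" "?A \<noteq> {}" using n by auto
  have "(\<Sum>x\<in>{1..n}. two_level \<rho> n k x) = (\<Sum>x\<in>{1..n}. if x \<le> k then \<rho> / D else 1 / D)"
    by (intro sum.cong) (auto simp: two_level_def D_def)
  also have "\<dots> = (real k * \<rho> + (real n - real k)) / D"
    using sum_if_le_const[OF k] by (simp add: add_divide_distrib)
  also have "\<dots> = 1" using D by (simp add: D_def algebra_simps)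
  finally have sum: "(\<Sum>x\<in>{1..n}. two_level \<rho> n k x) = 1" .
  have "Max ?A \<le> \<rho> / D" "1 / D \<le> Min ?A"
    using A D \<rho> by (auto simp: two_level_def D_def divide_right_mono)
  then have "Max ?A / Min ?A \<le> (\<rho> / D) / (1 / D)"
    using D \<rho> by (intro frac_le) auto
  also have "\<dots> = \<rho>" using D by simp
  finally show ?thesis
    using sum D \<rho> by (auto simp: Pn_def two_level_def D_def)
qed

lemma Pn_nonempty: "\<rho> \<ge> 1 \<Longrightarrow> n \<ge> 1 \<Longrightarrow> Pn \<rho> n \<noteq> {}"
  using two_level_in_Pn[of \<rho> n 0] by auto

lemma sum_two_level:
  assumes \<rho>: "\<rho> > 1" and n: "n \<ge> 1" and k: "k \<le> n"
  shows "(\<Sum>x\<in>{1..n}. f (real n * two_level \<rho> n k x) / real n)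
           = chord_div f \<rho> (real n / (real n + (\<rho> - 1) * real k))"
proof -
  define D where "D = real n + (\<rho> - 1) * real k"
  define m where "m = real n / D"
  have D: "D > 0" using n \<rho> by (simp add: D_def add_pos_nonneg)
  have "(\<Sum>x\<in>{1..n}. f (real n * two_level \<rho> n k x) / real n)
          = (\<Sum>x\<in>{1..n}. if x \<le> k then f (\<rho> * m) / real n else f m / real n)"
    by (intro sum.cong) (auto simp: two_level_def m_def D_def mult.commute)
  also have "\<dots> = real k * (f (\<rho> * m) / real n) + (real n - real k) * (f m / real n)"
    using sum_if_le_const[OF k] .
  also have "\<dots> = chord_div f \<rho> m"
  proof -
    have "1 - m = (\<rho> - 1) * real k / D" using D by (simp add: m_def D_def field_simps)
    then have "(1 - m) / ((\<rho> - 1) * m) = real k / real n"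
      using D \<rho> n by (simp add: m_def)
    then have "chord_div f \<rho> m = f m + real k / real n * (f (\<rho> * m) - f m)"
      by (simp add: chord_div_def)
    then show ?thesis
      using n by (simp add: field_simps)
  qed
  finally show ?thesis by (simp add: m_def D_def)
qed

lemma le_at_derivative_sign_change:
  fixes G G' :: "real \<Rightarrow> real"
  assumes der: "\<And>m. m > 0 \<Longrightarrow> (G has_real_derivative G' m) (at m)"
    and inc: "\<And>m. 0 < m \<Longrightarrow> m < ms \<Longrightarrow> G' m > 0"
    and dec: "\<And>m. ms < m \<Longrightarrow> G' m < 0"
    and "ms > 0" and "m > 0"
  shows "G m \<le> G ms"
proof (cases m ms rule: linorder_cases)
  case less
  obtain z where "m < z" "z < ms" "G ms - G m = (ms - m) * G' z"
    using MVT2[of m ms G G'] der less \<open>m > 0\<close> by (metis less_le_trans)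
  with inc[of z] less \<open>m > 0\<close> show ?thesis by (smt (verit) mult_pos_pos)
next
  case greater
  obtain z where "ms < z" "z < m" "G m - G ms = (m - ms) * G' z"
    using MVT2[of ms m G G'] der greater \<open>ms > 0\<close> by (metis less_le_trans)
  with dec[of z] greater show ?thesis by (smt (verit) mult_pos_neg)
qed simp

lemma derivative_sign_change_between:
  fixes G G' :: "real \<Rightarrow> real"
  assumes der: "\<And>m. m > 0 \<Longrightarrow> (G has_real_derivative G' m) (at m)"
    and inc: "\<And>m. 0 < m \<Longrightarrow> m < ms \<Longrightarrow> G' m > 0"
    and dec: "\<And>m. ms < m \<Longrightarrow> G' m < 0"
    and "0 < a" "a < b" "G a = G b"
  shows "a < ms \<and> ms < b"
proof -
  obtain z where z: "a < z" "z < b" "G b - G a = (b - a) * G' z"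
    using MVT2[of a b G G'] der \<open>0 < a\<close> \<open>a < b\<close> by (metis less_le_trans)
  with \<open>G a = G b\<close> have "G' z = 0" by simp
  with inc[of z] dec[of z] z \<open>0 < a\<close> have "z = ms" by force
  with z show ?thesis by simp
qed

lemma chord_div_endpoints:
  assumes "\<rho> > 1"
  shows "chord_div f \<rho> (1 / \<rho>) = chord_div f \<rho> 1"
proof -
  have "(1 - 1 / \<rho>) / ((\<rho> - 1) * (1 / \<rho>)) = 1" using assms by (simp add: field_simps)
  then show ?thesis using assms by (simp add: chord_div_def)
qed

lemma chord_div_maximum_from_closed_form:
  fixes G G' :: "real \<Rightarrow> real"
  assumes \<rho>: "\<rho> > 1"
    and closed_form: "\<And>m. m > 0 \<Longrightarrow> chord_div f \<rho> m = G m"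
    and der: "\<And>m. m > 0 \<Longrightarrow> (G has_real_derivative G' m) (at m)"
    and inc: "\<And>m. 0 < m \<Longrightarrow> m < ms \<Longrightarrow> G' m > 0"
    and dec: "\<And>m. ms < m \<Longrightarrow> G' m < 0"
    and "ms > 0" and max: "G ms = V"
  shows "(\<forall>m>0. chord_div f \<rho> m \<le> V) \<and>
         1 / \<rho> < ms \<and> ms < 1 \<and> isCont (chord_div f \<rho>) ms \<and> chord_div f \<rho> ms = V"
proof -
  have der': "(chord_div f \<rho> has_real_derivative G' m) (at m)" if "m > 0" for m
    by (rule has_field_derivative_transform_within_open[OF der[OF that], of "{0<..}"])
       (use that closed_form in auto)
  note sign = der' inc dec
  (* 1/\<rho> and 1 both correspond to the uniform distribution, so chord_div takes equal values there
     and its critical point lies in between. *)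
  have "1 / \<rho> < ms \<and> ms < 1"
    using derivative_sign_change_between[OF sign _ _ chord_div_endpoints[OF \<rho>]] \<rho> by simp
  moreover have "chord_div f \<rho> m \<le> V" if "m > 0" for m
    using le_at_derivative_sign_change[OF sign \<open>ms > 0\<close> that] closed_form[OF \<open>ms > 0\<close>] max
    by simp
  ultimately show ?thesis
    using DERIV_isCont[OF der'[OF \<open>ms > 0\<close>]] closed_form[OF \<open>ms > 0\<close>] max by simp
qed

lemma powr_difference_quotients_pos:
  fixes \<alpha> \<rho> :: real
  assumes \<rho>: "\<rho> > 1" and "\<alpha> \<noteq> 0" and "\<alpha> \<noteq> 1"
  shows "(\<rho> powr \<alpha> - 1) / \<alpha> > 0" and "(\<rho> - \<rho> powr \<alpha>) / (1 - \<alpha>) > 0"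
proof -
  have "1 < \<rho> powr \<alpha> \<longleftrightarrow> 0 < \<alpha>" "\<rho> powr \<alpha> < 1 \<longleftrightarrow> \<alpha> < 0"
       "\<rho> < \<rho> powr \<alpha> \<longleftrightarrow> 1 < \<alpha>" "\<rho> powr \<alpha> < \<rho> \<longleftrightarrow> \<alpha> < 1"
    using powr_less_cancel_iff[OF \<rho>, of 0 \<alpha>] powr_less_cancel_iff[OF \<rho>, of \<alpha> 0]
          powr_less_cancel_iff[OF \<rho>, of 1 \<alpha>] powr_less_cancel_iff[OF \<rho>, of \<alpha> 1] \<rho>
    by simp_all
  then show "(\<rho> powr \<alpha> - 1) / \<alpha> > 0" "(\<rho> - \<rho> powr \<alpha>) / (1 - \<alpha>) > 0"
    using assms by (auto simp: zero_less_divide_iff)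
qed

lemma chord_div_u_alpha_powr:
  assumes \<rho>: "\<rho> > 1" and \<alpha>: "\<alpha> \<noteq> 0" "\<alpha> \<noteq> 1" and m: "m > 0"
  shows "chord_div (u_alpha \<alpha>) \<rho> m =
           (m powr (\<alpha> - 1) * (\<rho> powr \<alpha> - 1 + (\<rho> - \<rho> powr \<alpha>) * m) / (\<rho> - 1) - 1) / (\<alpha> * (\<alpha> - 1))"
proof -
  define P where "P = m powr (\<alpha> - 1)"
  define k where "k = \<alpha> * (\<alpha> - 1)"
  have k: "k \<noteq> 0" using \<alpha> by (simp add: k_def)
  have m_powr: "m powr \<alpha> = m * P" using m by (simp add: P_def powr_mult_base)
  have u_m: "u_alpha \<alpha> m = (m * P - \<alpha> * (m - 1) - 1) / k"
    unfolding u_alpha_def m_powr using \<alpha> by (simp add: k_def)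
  have "(\<rho> * m) powr \<alpha> = \<rho> powr \<alpha> * (m * P)" using \<rho> m by (simp add: powr_mult m_powr)
  then have u_\<rho>m: "u_alpha \<alpha> (\<rho> * m) = (\<rho> powr \<alpha> * (m * P) - \<alpha> * (\<rho> * m - 1) - 1) / k"
    unfolding u_alpha_def using \<alpha> by (simp add: k_def)
  have diff: "u_alpha \<alpha> (\<rho> * m) - u_alpha \<alpha> m = ((\<rho> powr \<alpha> - 1) * m * P - \<alpha> * (\<rho> - 1) * m) / k"
    unfolding u_m u_\<rho>m by (simp add: diff_divide_distrib[symmetric] algebra_simps)
  have "chord_div (u_alpha \<alpha>) \<rho> m
      = (m * P - \<alpha> * (m - 1) - 1 + (1 - m) * ((\<rho> powr \<alpha> - 1) * P / (\<rho> - 1) - \<alpha>)) / k"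
    unfolding chord_div_def diff unfolding u_m using \<rho> m k by (simp add: field_simps)
  also have "\<dots> = (P * (\<rho> powr \<alpha> - 1 + (\<rho> - \<rho> powr \<alpha>) * m) / (\<rho> - 1) - 1) / k"
    using \<rho> by (simp add: field_simps)
  finally show ?thesis by (simp add: P_def k_def)
qed

lemma chord_div_u_alpha_maximum_powr:
  assumes \<rho>: "\<rho> > 1" and \<alpha>: "\<alpha> \<noteq> 0" "\<alpha> \<noteq> 1"
  shows "\<exists>ms. (\<forall>m>0. chord_div (u_alpha \<alpha>) \<rho> m \<le> Delta \<alpha> \<rho>) \<and> 1 / \<rho> < ms \<and> ms < 1 \<and>
              isCont (chord_div (u_alpha \<alpha>) \<rho>) ms \<and> chord_div (u_alpha \<alpha>) \<rho> ms = Delta \<alpha> \<rho>"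
proof -
  define X where "X = (\<rho> powr \<alpha> - 1) / \<alpha>"
  define Y where "Y = (\<rho> - \<rho> powr \<alpha>) / (1 - \<alpha>)"
  define c where "c = \<rho> - 1"
  have X: "X > 0" and Y: "Y > 0" unfolding X_def Y_def by (rule powr_difference_quotients_pos[OF assms])+
  have c: "c > 0" using \<rho> by (simp add: c_def)
  define G where "G m = (m powr (\<alpha> - 1) * (\<alpha> * X + (1 - \<alpha>) * Y * m) / c - 1) / (\<alpha> * (\<alpha> - 1))" for m
  define G' where "G' m = m powr (\<alpha> - 2) * (X - Y * m) / c" for m
  have closed_form: "chord_div (u_alpha \<alpha>) \<rho> m = G m" if "m > 0" for m
    using chord_div_u_alpha_powr[OF \<rho> \<alpha> that] \<alpha> by (simp add: G_def X_def Y_def c_def)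
  have der: "(G has_real_derivative G' m) (at m)" if m: "m > 0" for m
  proof -
    have m_powr: "m powr (\<alpha> - 1) = m * m powr (\<alpha> - 2)" using m by (simp add: powr_mult_base)
    have "(G has_real_derivative
            ((\<alpha> - 1) * m powr (\<alpha> - 1 - 1) * (\<alpha> * X + (1 - \<alpha>) * Y * m) + m powr (\<alpha> - 1) * ((1 - \<alpha>) * Y))
              / c / (\<alpha> * (\<alpha> - 1))) (at m)"
      unfolding G_def[abs_def] using m \<alpha> c by (auto intro!: derivative_eq_intros)
    then show ?thesis
      by (rule DERIV_cong) (use \<alpha> c m_powr in \<open>simp add: G'_def field_simps\<close>)
  qed
  have inc: "G' m > 0" if "0 < m" "m < X / Y" for m
    using that Y c by (simp add: G'_def field_simps)
  have dec: "G' m < 0" if "X / Y < m" for m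
  proof -
    have "m > 0" using that X Y by (smt (verit) divide_pos_pos)
    with that Y c show ?thesis by (simp add: G'_def field_simps mult_pos_neg)
  qed
  have "G (X / Y) = Delta \<alpha> \<rho>"
  proof -
    have "(X / Y) powr (\<alpha> - 1) * (\<alpha> * X + (1 - \<alpha>) * Y * (X / Y)) = X powr \<alpha> * Y powr (1 - \<alpha>)"
      using X Y by (simp add: powr_divide powr_diff field_simps)
    then show ?thesis
      using \<alpha> by (simp add: G_def Delta_def X_def[symmetric] Y_def[symmetric] c_def)
  qed
  moreover have "X / Y > 0" using X Y by simp
  ultimately show ?thesis
    using chord_div_maximum_from_closed_form[OF \<rho> closed_form der inc dec] by blast
qed

lemma chord_div_u_alpha_maximum_one:
  assumes \<rho>: "\<rho> > 1"
  shows "\<exists>ms. (\<forall>m>0. chord_div (u_alpha 1) \<rho> m \<le> Delta 1 \<rho>) \<and> 1 / \<rho> < ms \<and> ms < 1 \<and>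
              isCont (chord_div (u_alpha 1) \<rho>) ms \<and> chord_div (u_alpha 1) \<rho> ms = Delta 1 \<rho>"
proof -
  define k where "k = \<rho> * ln \<rho> / (\<rho> - 1)"
  have k: "k > 0" using \<rho> by (simp add: k_def)
  define G where "G m = ln m + k * (1 - m)" for m
  define G' where "G' m = 1 / m - k" for m
  have closed_form: "chord_div (u_alpha 1) \<rho> m = G m" if m: "m > 0" for m
  proof -
    have "u_alpha 1 (\<rho> * m) - u_alpha 1 m = m * (\<rho> * ln \<rho> + (\<rho> - 1) * ln m - (\<rho> - 1))"
      using \<rho> m by (simp add: u_alpha_def ln_mult algebra_simps)
    then show ?thesis
      unfolding chord_div_def using \<rho> m by (simp add: u_alpha_def G_def k_def field_simps)
  qed
  have der: "(G has_real_derivative G' m) (at m)" if "m > 0" for m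
    unfolding G_def[abs_def] G'_def using that by (auto intro!: derivative_eq_intros)
  have inc: "G' m > 0" if "0 < m" "m < 1 / k" for m
    using that k by (simp add: G'_def field_simps)
  have dec: "G' m < 0" if "1 / k < m" for m
  proof -
    have "m > 0" using that k by (meson divide_pos_pos less_trans zero_less_one)
    with that k show ?thesis by (simp add: G'_def field_simps)
  qed
  have "Delta 1 \<rho> = k - ln (exp 1 * k)" by (simp add: Delta_def k_def mult.assoc)
  also have "\<dots> = k - 1 - ln k" using k by (simp add: ln_mult)
  finally have "G (1 / k) = Delta 1 \<rho>" using k by (simp add: G_def ln_div algebra_simps)
  moreover have "1 / k > 0" using k by simp
  ultimately show ?thesis
    using chord_div_maximum_from_closed_form[OF \<rho> closed_form der inc dec] by blast
qed

lemma chord_div_u_alpha_maximum_zero: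
  assumes \<rho>: "\<rho> > 1"
  shows "\<exists>ms. (\<forall>m>0. chord_div (u_alpha 0) \<rho> m \<le> Delta 0 \<rho>) \<and> 1 / \<rho> < ms \<and> ms < 1 \<and>
              isCont (chord_div (u_alpha 0) \<rho>) ms \<and> chord_div (u_alpha 0) \<rho> ms = Delta 0 \<rho>"
proof -
  define L where "L = ln \<rho> / (\<rho> - 1)"
  have L: "L > 0" using \<rho> by (simp add: L_def)
  define G where "G m = - ln m - L * (1 / m - 1)" for m
  define G' where "G' m = (L - m) / m\<^sup>2" for m
  have closed_form: "chord_div (u_alpha 0) \<rho> m = G m" if m: "m > 0" for m
    unfolding chord_div_def using \<rho> m by (simp add: u_alpha_def G_def L_def ln_mult field_simps)
  have der: "(G has_real_derivative G' m) (at m)" if "m > 0" for m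
    unfolding G_def[abs_def] G'_def using that
    by (auto intro!: derivative_eq_intros simp: field_simps power2_eq_square)
  have inc: "G' m > 0" if "0 < m" "m < L" for m
    using that by (simp add: G'_def)
  have dec: "G' m < 0" if "L < m" for m
    using that L by (simp add: G'_def divide_neg_pos)
  have "Delta 0 \<rho> = \<rho> * L - ln (exp 1 * \<rho> * L)" by (simp add: Delta_def L_def)
  also have "\<dots> = (\<rho> * L - ln \<rho>) - 1 - ln L" using \<rho> L by (simp add: ln_mult)
  also have "\<rho> * L - ln \<rho> = L" using \<rho> by (simp add: L_def field_simps)
  finally have "G L = Delta 0 \<rho>" using L by (simp add: G_def algebra_simps)
  with chord_div_maximum_from_closed_form[OF \<rho> closed_form der inc dec] L show ?thesis
    by blast
qed

lemma chord_div_u_alpha_maximum: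
  assumes "\<rho> > 1"
  shows "\<exists>ms. (\<forall>m>0. chord_div (u_alpha \<alpha>) \<rho> m \<le> Delta \<alpha> \<rho>) \<and> 1 / \<rho> < ms \<and> ms < 1 \<and>
              isCont (chord_div (u_alpha \<alpha>) \<rho>) ms \<and> chord_div (u_alpha \<alpha>) \<rho> ms = Delta \<alpha> \<rho>"
  using chord_div_u_alpha_maximum_powr[OF assms] chord_div_u_alpha_maximum_one[OF assms]
        chord_div_u_alpha_maximum_zero[OF assms]
  by (cases "\<alpha> = 0 \<or> \<alpha> = 1") auto

lemma floor_mult_divide_tendsto: "(\<lambda>n. of_int \<lfloor>l * real n\<rfloor> / real n) \<longlonglongrightarrow> l"
proof (rule tendsto_sandwich[of "\<lambda>n. l - 1 / real n" _ _ "\<lambda>n. l"])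
  show "\<forall>\<^sub>F n in sequentially. l - 1 / real n \<le> of_int \<lfloor>l * real n\<rfloor> / real n"
    using eventually_gt_at_top[of "0::nat"]
  proof eventually_elim
    case (elim n)
    have "l - 1 / real n = (l * real n - 1) / real n" using elim by (simp add: field_simps)
    also have "\<dots> \<le> of_int \<lfloor>l * real n\<rfloor> / real n" by (intro divide_right_mono) linarith+
    finally show ?case .
  qed
  show "\<forall>\<^sub>F n in sequentially. of_int \<lfloor>l * real n\<rfloor> / real n \<le> l"
    using eventually_gt_at_top[of "0::nat"]
    by eventually_elim (simp add: field_simps)
  show "(\<lambda>n. l - 1 / real n) \<longlonglongrightarrow> l"
    using tendsto_diff[OF tendsto_const lim_1_over_n] by simp
qed simp

lemma two_level_parameter_tendsto:
  assumes \<rho>: "\<rho> > 1" and ms: "1 / \<rho> \<le> ms" "ms \<le> 1"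
  obtains k :: "nat \<Rightarrow> nat"
  where "\<And>n. k n \<le> n" and "(\<lambda>n. real n / (real n + (\<rho> - 1) * real (k n))) \<longlonglongrightarrow> ms"
proof
  have ms0: "ms > 0" using ms \<rho> by (smt (verit) divide_pos_pos)
  (* the proportion of large masses for which the parameter equals ms *)
  define l where "l = (1 - ms) / ((\<rho> - 1) * ms)"
  have l: "0 \<le> l" "l \<le> 1" using ms ms0 \<rho> by (simp_all add: l_def field_simps)
  define k where "k n = nat \<lfloor>l * real n\<rfloor>" for n
  show "k n \<le> n" for n
  proof -
    have "l * real n \<le> real n" using l by (simp add: mult_left_le_one_le)
    then have "\<lfloor>l * real n\<rfloor> \<le> int n" by (metis floor_mono floor_of_nat)
    then show ?thesis by (simp add: k_def)
  qed
  have k: "real (k n) = of_int \<lfloor>l * real n\<rfloor>" for n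
    using l by (simp add: k_def)
  have "(\<lambda>n. 1 / (1 + (\<rho> - 1) * (real (k n) / real n))) \<longlonglongrightarrow> 1 / (1 + (\<rho> - 1) * l)"
    unfolding k using \<rho> l by (intro tendsto_intros floor_mult_divide_tendsto) (smt (verit) mult_nonneg_nonneg)
  also have "1 / (1 + (\<rho> - 1) * l) = ms" using ms0 \<rho> by (simp add: l_def field_simps)
  finally show "(\<lambda>n. real n / (real n + (\<rho> - 1) * real (k n))) \<longlonglongrightarrow> ms"
  proof (rule Lim_transform_eventually)
    show "\<forall>\<^sub>F n in sequentially. 1 / (1 + (\<rho> - 1) * (real (k n) / real n))
                                   = real n / (real n + (\<rho> - 1) * real (k n))"
      using eventually_gt_at_top[of "0::nat"] by eventually_elim (simp add: field_simps)
  qed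
qed

lemma tendsto_SUP_sandwich:
  fixes F :: "nat \<Rightarrow> 'a \<Rightarrow> real"
  assumes upper: "\<And>n Q. n \<ge> 1 \<Longrightarrow> Q \<in> S n \<Longrightarrow> F n Q \<le> B"
    and lower: "\<And>n. n \<ge> 1 \<Longrightarrow> \<exists>Q\<in>S n. X n \<le> F n Q"
    and X: "X \<longlonglongrightarrow> B"
  shows "(\<lambda>n. SUP Q\<in>S n. F n Q) \<longlonglongrightarrow> B"
proof (rule tendsto_sandwich[OF _ _ X tendsto_const])
  have "X n \<le> (SUP Q\<in>S n. F n Q) \<and> (SUP Q\<in>S n. F n Q) \<le> B" if n: "n \<ge> 1" for n
  proof -
    obtain Q where Q: "Q \<in> S n" "X n \<le> F n Q" using lower[OF n] by blast
    have "bdd_above (F n ` S n)" using upper[OF n] by (intro bdd_aboveI2)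
    with Q upper[OF n] show ?thesis
      by (auto intro: cSUP_upper2 cSUP_least)
  qed
  then show "\<forall>\<^sub>F n in sequentially. X n \<le> (SUP Q\<in>S n. F n Q)"
    and "\<forall>\<^sub>F n in sequentially. (SUP Q\<in>S n. F n Q) \<le> B"
    by (auto simp: eventually_sequentially)
qed

lemma alpha_div_unif_le_Delta:
  assumes "\<rho> > 1" and "n \<ge> 1" and "Q \<in> Pn \<rho> n"
  shows "alpha_div \<alpha> n Q (unif n) \<le> Delta \<alpha> \<rho>"
proof -
  obtain m where "m > 0" and "alpha_div \<alpha> n Q (unif n) \<le> chord_div (u_alpha \<alpha>) \<rho> m"
    using sum_le_chord_div[OF convex_on_u_alpha assms] by (auto simp: alpha_div_unif)
  moreover have "chord_div (u_alpha \<alpha>) \<rho> m \<le> Delta \<alpha> \<rho>"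
    using chord_div_u_alpha_maximum[OF assms(1), of \<alpha>] \<open>m > 0\<close> by blast
  ultimately show ?thesis by linarith
qed

lemma SUP_alpha_div_unif_le:
  assumes "\<rho> > 1" and "n \<ge> 1"
  shows "(SUP Q\<in>Pn \<rho> n. alpha_div \<alpha> n Q (unif n)) \<le> Delta \<alpha> \<rho>"
  using Pn_nonempty alpha_div_unif_le_Delta[OF assms] assms by (intro cSUP_least) auto

lemma SUP_alpha_div_unif_tendsto:
  assumes \<rho>: "\<rho> > 1"
  shows "(\<lambda>n. SUP Q\<in>Pn \<rho> n. alpha_div \<alpha> n Q (unif n)) \<longlonglongrightarrow> Delta \<alpha> \<rho>"
proof -
  obtain ms where ms: "1 / \<rho> < ms" "ms < 1" "isCont (chord_div (u_alpha \<alpha>) \<rho>) ms"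
      "chord_div (u_alpha \<alpha>) \<rho> ms = Delta \<alpha> \<rho>"
    using chord_div_u_alpha_maximum[OF \<rho>] by blast
  obtain k where k: "\<And>n. k n \<le> n"
    and lim: "(\<lambda>n. real n / (real n + (\<rho> - 1) * real (k n))) \<longlonglongrightarrow> ms"
    using two_level_parameter_tendsto[OF \<rho>, of ms] ms by auto
  let ?X = "\<lambda>n. chord_div (u_alpha \<alpha>) \<rho> (real n / (real n + (\<rho> - 1) * real (k n)))"
  have "?X \<longlonglongrightarrow> Delta \<alpha> \<rho>"
    using isCont_tendsto_compose[OF ms(3) lim] ms(4) by simp
  moreover have "\<exists>Q\<in>Pn \<rho> n. ?X n \<le> alpha_div \<alpha> n Q (unif n)" if n: "n \<ge> 1" for n
  proof
    show "two_level \<rho> n (k n) \<in> Pn \<rho> n" using two_level_in_Pn[OF _ n k] \<rho> by simp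
    show "?X n \<le> alpha_div \<alpha> n (two_level \<rho> n (k n)) (unif n)"
      using sum_two_level[OF \<rho> n k] by (simp add: alpha_div_unif)
  qed
  ultimately show ?thesis
    by (intro tendsto_SUP_sandwich[where X="?X"] alpha_div_unif_le_Delta[OF \<rho>])
qed

lemma rel_ent_unif:
  assumes "Q \<in> Pn \<rho> n"
  shows "rel_ent b n Q (unif n) = alpha_div 1 n Q (unif n) / ln b"
proof -
  have sum: "(\<Sum>x\<in>{1..n}. Q x) = 1" using assms by (simp add: Pn_def)
  then have n: "n \<ge> 1" by (cases n) auto
  have "alpha_div 1 n Q (unif n) = (\<Sum>x\<in>{1..n}. Q x * ln (real n * Q x) + (1 / real n - Q x))"
    unfolding alpha_div_unif using n by (intro sum.cong) (auto simp: u_alpha_def field_simps)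
  also have "\<dots> = (\<Sum>x\<in>{1..n}. Q x * ln (real n * Q x))"
    using n sum by (simp add: sum.distrib sum_subtractf)
  finally show ?thesis
    unfolding rel_ent_def log_def
    by (simp add: sum_divide_distrib unif_def mult.commute)
qed

lemma cSUP_divide_pos:
  fixes f :: "'a \<Rightarrow> real"
  assumes "A \<noteq> {}" and "bdd_above (f ` A)" and "c > 0"
  shows "(SUP x\<in>A. f x / c) = (SUP x\<in>A. f x) / c"
proof -
  have "(SUP x\<in>A. f x) / c = (SUP y\<in>f ` A. y / c)"
  proof (rule continuous_at_Sup_mono)
    show "mono (\<lambda>y. y / c)" using assms by (simp add: mono_def divide_right_mono)
    show "continuous (at_left (Sup (f ` A))) (\<lambda>y. y / c)" using assms by (intro continuous_intros) auto
  qed (use assms in auto)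
  then show ?thesis by (simp add: image_image)
qed

lemma SUP_rel_ent_unif:
  assumes \<rho>: "\<rho> > 1" and b: "b > 1" and n: "n \<ge> 1"
  shows "(SUP Q\<in>Pn \<rho> n. rel_ent b n Q (unif n)) = (SUP Q\<in>Pn \<rho> n. alpha_div 1 n Q (unif n)) / ln b"
proof -
  have "Pn \<rho> n \<noteq> {}" using Pn_nonempty \<rho> n by simp
  moreover have "bdd_above ((\<lambda>Q. alpha_div 1 n Q (unif n)) ` Pn \<rho> n)"
    using alpha_div_unif_le_Delta[OF \<rho> n] by (intro bdd_aboveI2)
  ultimately show ?thesis
    using b by (simp add: rel_ent_unif cSUP_divide_pos)
qed

theorem mainTheorem9:
  fixes \<alpha> \<rho> :: real
  assumes "\<rho> > 1"
  shows "((\<lambda>n. SUP Q\<in>Pn \<rho> n. alpha_div \<alpha> n Q (unif n)) \<longlonglongrightarrow> Delta \<alpha> \<rho>) \<and>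
         (\<forall>b::real. b > 1 \<longrightarrow>
           (\<forall>n::nat. n \<ge> 2 \<longrightarrow>
              (SUP Q\<in>Pn \<rho> n. rel_ent b n Q (unif n))
                \<le> \<rho> * log b \<rho> / (\<rho> - 1) - log b (exp 1 * \<rho> * ln \<rho> / (\<rho> - 1))) \<and>
           (\<lambda>n. SUP Q\<in>Pn \<rho> n. rel_ent b n Q (unif n)) \<longlonglongrightarrow>
              \<rho> * log b \<rho> / (\<rho> - 1) - log b (exp 1 * \<rho> * ln \<rho> / (\<rho> - 1)))"
proof (intro conjI allI impI)
  show "(\<lambda>n. SUP Q\<in>Pn \<rho> n. alpha_div \<alpha> n Q (unif n)) \<longlonglongrightarrow> Delta \<alpha> \<rho>"
    using SUP_alpha_div_unif_tendsto[OF assms] .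
  fix b :: real
  assume b: "b > 1"
  have Delta_one: "Delta 1 \<rho> / ln b = \<rho> * log b \<rho> / (\<rho> - 1) - log b (exp 1 * \<rho> * ln \<rho> / (\<rho> - 1))"
    by (simp add: Delta_def log_def diff_divide_distrib)
  show "(SUP Q\<in>Pn \<rho> n. rel_ent b n Q (unif n))
          \<le> \<rho> * log b \<rho> / (\<rho> - 1) - log b (exp 1 * \<rho> * ln \<rho> / (\<rho> - 1))" if "n \<ge> 2" for n
    using SUP_rel_ent_unif[OF assms b] SUP_alpha_div_unif_le[OF assms, of n 1] that b
    by (simp flip: Delta_one add: divide_right_mono)
  have "(\<lambda>n. (SUP Q\<in>Pn \<rho> n. alpha_div 1 n Q (unif n)) / ln b) \<longlonglongrightarrow> Delta 1 \<rho> / ln b"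
    using SUP_alpha_div_unif_tendsto[OF assms] by (rule tendsto_divide) (use b in auto)
  then show "(\<lambda>n. SUP Q\<in>Pn \<rho> n. rel_ent b n Q (unif n)) \<longlonglongrightarrow>
              \<rho> * log b \<rho> / (\<rho> - 1) - log b (exp 1 * \<rho> * ln \<rho> / (\<rho> - 1))"
    unfolding Delta_one
    by (rule Lim_transform_eventually, intro eventually_sequentiallyI[of 1])
       (simp add: SUP_rel_ent_unif[OF assms b])
qed

end
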